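(* Let $u(x)=\log\sum_{I\in\mathcal{I}}a_Ie^{I\cdot x}-\sum_{i=1}^n x_i$ (with $\mathcal{I}\subset\mathbb{N}^n$ finite containing all $I$ with $|I|\le1$, $a_I>0$ on $\mathcal{I}$, $a_I=1$ for $|I|\le1$) be a solution of $\det D^2u=e^{-u}$ on $\mathbb{R}^n$. Then the barycenter of the polytope $\mathcal{P}=\overline{Du(\mathbb{R}^n)}$ is the origin. *)

theory Defs
  imports "HOL-Analysis.Analysis"
begin

definition partial_deriv :: "(real^'n \<Rightarrow> real) \<Rightarrow> 'n \<Rightarrow> real^'n \<Rightarrow> real" where
  "partial_deriv f i x = deriv (\<lambda>t. f (x + t *\<^sub>R axis i 1)) 0"

definition grad :: "(real^'n \<Rightarrow> real) \<Rightarrow> real^'n \<Rightarrow> real^'n" where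
  "grad f x = (\<chi> i. partial_deriv f i x)"

definition hessian :: "(real^'n \<Rightarrow> real) \<Rightarrow> real^'n \<Rightarrow> real^'n^'n" where
  "hessian f x = (\<chi> i j. partial_deriv (\<lambda>y. partial_deriv f j y) i x)"

definition barycenter :: "(real^'n) set \<Rightarrow> real^'n" where
  "barycenter P = inverse (measure lebesgue P) *\<^sub>R integral P (\<lambda>y. y)"

end

theory Submission
  imports Defs "HOL-Homology.Invariance_of_Domain"
begin

text \<open>Write u = ln Z - <1, x> with Z x = (\<Sum>I. a I * exp <I, x>). Then Du x + 1 is the mean of
  the exponents I under the Gibbs weights a I * exp <I, x> / Z x, and D^2 u x is their covariance
  matrix, which is positive definite because 0 and the unit vectors are exponents. So Du is
  injective, its range is open by invariance of domain, it lies in the polytope P = conv {I} - 1 and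
  it covers the interior of P (minimise ln Z - <q, x>); hence the closure of the range differs from
  it by a null set. Changing variables y = Du x and using det D^2 u = exp (- u),
  the integral of y over P equals the integral of exp (- u) * Du = - D (exp (- u)) over all of
  space, which vanishes: exp (- u) is integrable (the same change of variables with integrand 1),
  and its directional derivatives are dominated by a multiple of exp (- u) itself.\<close>

section \<open>Change of variables over an arbitrary finite index type\<close>

definition extend_perm :: "('n \<Rightarrow> 'k) \<Rightarrow> ('n \<Rightarrow> 'n) \<Rightarrow> 'k \<Rightarrow> 'k" where
  "extend_perm e q k = (if k \<in> range e then e (q (inv_into UNIV e k)) else k)"

lemma extend_perm_id: "inj e \<Longrightarrow> extend_perm e id = id"
  by (auto simp: extend_perm_def fun_eq_iff f_inv_into_f)

lemma extend_perm_transpose: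
  "inj e \<Longrightarrow> extend_perm e (Transposition.transpose a b \<circ> q)
     = Transposition.transpose (e a) (e b) \<circ> extend_perm e q"
  by (auto simp: extend_perm_def fun_eq_iff Transposition.transpose_def inj_eq)

lemma extend_perm_permutes:
  assumes "inj e" "q permutes UNIV"
  shows "extend_perm e q permutes UNIV"
proof -
  have "bij (extend_perm e q)"
    by (rule bij_betw_byWitness[where f'="extend_perm e (inv_into UNIV q)"])
       (use assms in \<open>auto simp: extend_perm_def permutes_inverses f_inv_into_f\<close>)
  then show ?thesis by (simp add: permutes_def bij_iff)
qed

lemma extend_perm_inj_on: "inj e \<Longrightarrow> inj_on (extend_perm e) {q. q permutes UNIV}"
  by (rule inj_onI) (metis extend_perm_def inv_f_f rangeI inj_eq ext)

lemma sign_extend_perm: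
  fixes e :: "'n::finite \<Rightarrow> 'k::finite"
  assumes e: "inj e" and "q permutes UNIV"
  shows "sign (extend_perm e q) = sign q"
  using assms(2) finite_class.finite_UNIV[where 'a='n]
proof (induction rule: permutes_induct)
  case id
  show ?case by (metis extend_perm_id[OF e] sign_id)
next
  case (swap a b p)
  then have "permutation p" "permutation (extend_perm e p)" "e a \<noteq> e b"
    using extend_perm_permutes[OF e, of p] e by (auto simp: permutes_imp_permutation inj_eq)
  with swap show ?case
    by (simp only: extend_perm_transpose[OF e] sign_compose permutation_swap_id sign_swap_id)
qed

definition extend_matrix :: "('n::finite \<Rightarrow> 'k::finite) \<Rightarrow> real^'n^'n \<Rightarrow> real^'k^'k" where
  "extend_matrix e D = (\<chi> k l.
     if k \<in> range e \<and> l \<in> range e then D $ inv_into UNIV e k $ inv_into UNIV e l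
     else if k = l then 1 else 0)"

lemma prod_extend_matrix_eq_0:
  fixes e :: "'n::finite \<Rightarrow> 'k::finite"
  assumes e: "inj e" and p: "p permutes UNIV" "p \<notin> extend_perm e ` {q. q permutes UNIV}"
  shows "(\<Prod>k\<in>UNIV. extend_matrix e D $ k $ p k) = 0"
proof (cases "\<forall>k. k \<notin> range e \<longrightarrow> p k = k")
  case True
  have pinj: "inj p" using p by (auto simp: permutes_inj)
  have in_range: "p (e i) \<in> range e" for i
  proof (rule ccontr)
    assume "p (e i) \<notin> range e"
    then have "p (p (e i)) = p (e i)" using True by blast
    with \<open>p (e i) \<notin> range e\<close> pinj show False by (auto simp: inj_eq)
  qed
  define q where "q = inv_into UNIV e \<circ> p \<circ> e"
  have "inj q" unfolding q_def using pinj e in_range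
    by (auto simp: inj_def) (metis f_inv_into_f)
  then have "bij q" using finite_UNIV_inj_surj[of q] by (simp add: bij_def)
  then have "q permutes UNIV" by (simp add: permutes_def bij_iff)
  moreover have "extend_perm e q = p"
    using True in_range e by (auto simp: extend_perm_def q_def fun_eq_iff f_inv_into_f)
  ultimately show ?thesis using p by auto
next
  case False
  then obtain k where "k \<notin> range e" "p k \<noteq> k" by blast
  then have "extend_matrix e D $ k $ p k = 0" by (simp add: extend_matrix_def)
  then show ?thesis by (intro prod_zero) auto
qed

lemma prod_extend_matrix_extend_perm:
  fixes e :: "'n::finite \<Rightarrow> 'k::finite"
  assumes e: "inj e"
  shows "(\<Prod>k\<in>UNIV. extend_matrix e D $ k $ extend_perm e q k) = (\<Prod>i\<in>UNIV. D $ i $ q i)"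
proof -
  let ?f = "\<lambda>k. extend_matrix e D $ k $ extend_perm e q k"
  have "(\<Prod>k\<in>UNIV. ?f k) = (\<Prod>k\<in>range e. ?f k) * (\<Prod>k\<in>-range e. ?f k)"
    by (subst prod.union_disjoint[symmetric]) (auto simp: Compl_partition)
  also have "(\<Prod>k\<in>-range e. ?f k) = 1"
    by (intro prod.neutral) (auto simp: extend_matrix_def extend_perm_def)
  also have "(\<Prod>k\<in>range e. ?f k) = (\<Prod>i\<in>UNIV. D $ i $ q i)"
    using e by (simp add: prod.reindex extend_matrix_def extend_perm_def)
  finally show ?thesis by simp
qed

lemma det_extend_matrix:
  fixes e :: "'n::finite \<Rightarrow> 'k::finite"
  assumes e: "inj e"
  shows "det (extend_matrix e D) = det D"
proof -
  let ?t = "\<lambda>p. of_int (sign p) * (\<Prod>k\<in>UNIV. extend_matrix e D $ k $ p k)"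
  let ?Q = "{q. q permutes (UNIV::'n set)}"
  have "det (extend_matrix e D) = (\<Sum>p | p permutes UNIV. ?t p)" by (simp add: det_def)
  also have "\<dots> = sum ?t (extend_perm e ` ?Q)"
    using prod_extend_matrix_eq_0[OF e] extend_perm_permutes[OF e]
    by (intro sum.mono_neutral_right) auto
  also have "\<dots> = (\<Sum>q\<in>?Q. of_int (sign q) * (\<Prod>i\<in>UNIV. D $ i $ q i))"
    using extend_perm_inj_on[OF e]
    by (simp add: sum.reindex sign_extend_perm[OF e] prod_extend_matrix_extend_perm[OF e])
  also have "\<dots> = det D" by (simp add: det_def)
  finally show ?thesis .
qed

definition restrict_vec :: "('n::finite \<Rightarrow> 'k::finite) \<Rightarrow> real^'k \<Rightarrow> real^'n" where
  "restrict_vec e z = (\<chi> i. z $ e i)"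

definition zero_extend :: "('n::finite \<Rightarrow> 'k::finite) \<Rightarrow> real^'n \<Rightarrow> real^'k" where
  "zero_extend e x = (\<chi> k. if k \<in> range e then x $ inv_into UNIV e k else 0)"

definition off_range :: "('n::finite \<Rightarrow> 'k::finite) \<Rightarrow> real^'k \<Rightarrow> real^'k" where
  "off_range e z = (\<chi> k. if k \<in> range e then 0 else z $ k)"

definition unit_cylinder :: "('n::finite \<Rightarrow> 'k::finite) \<Rightarrow> (real^'k) set" where
  "unit_cylinder e = {z. \<forall>k. k \<notin> range e \<longrightarrow> 0 < z $ k \<and> z $ k < 1}"

lemma linear_restrict_vec: "linear (restrict_vec e)"
  by (auto simp: linear_iff restrict_vec_def vec_eq_iff)

lemma linear_zero_extend: "linear (zero_extend e)"
  by (auto simp: linear_iff zero_extend_def vec_eq_iff)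

lemma linear_off_range: "linear (off_range e)"
  by (auto simp: linear_iff off_range_def vec_eq_iff)

lemma restrict_vec_borel_measurable [measurable]: "restrict_vec e \<in> borel_measurable borel"
  by (intro borel_measurable_continuous_onI linear_continuous_on
      linear_conv_bounded_linear[THEN iffD1] linear_restrict_vec)

lemma open_unit_cylinder: "open (unit_cylinder e)"
proof -
  have "unit_cylinder e = (\<Inter>k\<in>-range e. {z. 0 < z $ k} \<inter> {z. z $ k < 1})"
    by (auto simp: unit_cylinder_def)
  moreover have "open {z::real^'k. 0 < z $ k}" "open {z::real^'k. z $ k < 1}" for k
    by (simp_all add: open_halfspace_component_lt_cart open_halfspace_component_gt_cart)
  ultimately show ?thesis by (auto intro!: open_INT open_Int)
qed

lemma unit_cylinder_borel [measurable]: "unit_cylinder e \<in> sets borel"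
  by (rule borel_open[OF open_unit_cylinder])

lemma prod_Basis_vec: "(\<Prod>b\<in>Basis. (x::real^'n) \<bullet> b) = (\<Prod>i\<in>UNIV. x $ i)"
  by (simp add: Basis_vec_def cart_eq_inner_axis axis_eq_axis prod.UNION_disjoint)

lemma vimage_box_unit_cylinder:
  assumes e: "inj e"
  shows "restrict_vec e -` box l u \<inter> unit_cylinder e = box (zero_extend e l) (zero_extend e u + off_range e 1)"
proof (intro equalityI subsetI)
  fix z assume "z \<in> box (zero_extend e l) (zero_extend e u + off_range e 1)"
  then have z: "zero_extend e l $ k < z $ k \<and> z $ k < (zero_extend e u + off_range e 1) $ k" for k
    by (simp add: mem_box_cart)
  have "l $ i < z $ e i \<and> z $ e i < u $ i" for i
    using z[of "e i"] e by (simp add: zero_extend_def off_range_def)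
  moreover have "0 < z $ k \<and> z $ k < 1" if "k \<notin> range e" for k
    using z[of k] that by (simp add: zero_extend_def off_range_def)
  ultimately show "z \<in> restrict_vec e -` box l u \<inter> unit_cylinder e"
    by (simp add: mem_box_cart restrict_vec_def unit_cylinder_def)
qed (use e in \<open>auto simp: mem_box_cart restrict_vec_def unit_cylinder_def zero_extend_def
    off_range_def f_inv_into_f\<close>)

text \<open>The fibres of the projection over the cylinder are unit cubes, so it pushes Lebesgue measure
  on the cylinder forward to Lebesgue measure.\<close>
lemma distr_unit_cylinder_restrict_vec:
  fixes e :: "'n::finite \<Rightarrow> 'k::finite"
  assumes e: "inj e"
  shows "distr (density lborel (indicator (unit_cylinder e))) borel (restrict_vec e)
    = (lborel :: (real^'n) measure)"
proof (rule lborel_eqI[symmetric])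
  fix l u :: "real^'n"
  assume "\<And>b. b \<in> Basis \<Longrightarrow> l \<bullet> b \<le> u \<bullet> b"
  then have "l $ i \<le> u $ i" for i
    by (metis axis_in_Basis_iff cart_eq_inner_axis Basis_real_def insertI1)
  then have le: "zero_extend e l \<bullet> b \<le> (zero_extend e u + off_range e 1) \<bullet> b" if "b \<in> Basis" for b
    using that by (auto simp: Basis_vec_def cart_eq_inner_axis[symmetric] zero_extend_def off_range_def)
  let ?C = "restrict_vec e -` box l u \<inter> unit_cylinder e"
  let ?w = "zero_extend e u + off_range e 1 - zero_extend e l"
  have "emeasure (distr (density lborel (indicator (unit_cylinder e))) borel (restrict_vec e)) (box l u)
      = emeasure (density lborel (indicator (unit_cylinder e))) (restrict_vec e -` box l u)"
    by (subst emeasure_distr) auto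
  also have "\<dots> = (\<integral>\<^sup>+ z. indicator (unit_cylinder e) z * indicator (restrict_vec e -` box l u) z \<partial>lborel)"
    using measurable_sets[OF restrict_vec_borel_measurable, of "box l u" e]
    by (subst emeasure_density) auto
  also have "\<dots> = (\<integral>\<^sup>+ z. indicator ?C z \<partial>lborel)"
    by (intro nn_integral_cong) (auto split: split_indicator)
  also have "\<dots> = emeasure lborel ?C"
    using vimage_box_unit_cylinder[OF e] by (subst nn_integral_indicator) auto
  also have "\<dots> = (\<Prod>k\<in>range e. ?w $ k) * (\<Prod>k\<in>-range e. ?w $ k)"
    by (simp add: vimage_box_unit_cylinder[OF e] emeasure_lborel_box[OF le] prod_Basis_vec
        flip: prod.union_disjoint[of "range e" "-range e"])
  also have "\<dots> = (\<Prod>i\<in>UNIV. (u - l) $ i)"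
    using e by (simp add: prod.reindex zero_extend_def off_range_def)
  finally show "emeasure (distr (density lborel (indicator (unit_cylinder e))) borel (restrict_vec e)) (box l u)
      = (\<Prod>b\<in>Basis. (u - l) \<bullet> b)"
    by (simp add: prod_Basis_vec)
qed simp

lemma lborel_integral_unit_cylinder:
  fixes e :: "'n::finite \<Rightarrow> 'k::finite" and h :: "real^'n \<Rightarrow> 'b::euclidean_space"
  assumes e: "inj e" and [measurable]: "h \<in> borel_measurable borel"
  defines "H \<equiv> \<lambda>z. indicator (unit_cylinder e) z *\<^sub>R h (restrict_vec e z)"
  shows "integrable lborel h \<longleftrightarrow> integrable lborel H"
    and "integral\<^sup>L lborel h = integral\<^sup>L lborel H"
proof -
  let ?D = "density lborel (indicator (unit_cylinder e) :: real^'k \<Rightarrow> ennreal)"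
  have D: "?D = density lborel (\<lambda>z. ennreal (indicator (unit_cylinder e) z))"
    by (intro density_cong) (auto split: split_indicator)
  have "integrable lborel h \<longleftrightarrow> integrable (distr ?D borel (restrict_vec e)) h"
    by (simp add: distr_unit_cylinder_restrict_vec[OF e])
  also have "\<dots> \<longleftrightarrow> integrable ?D (\<lambda>z. h (restrict_vec e z))"
    by (rule integrable_distr_eq) auto
  also have "\<dots> \<longleftrightarrow> integrable lborel H"
    unfolding D H_def by (subst integrable_density) auto
  finally show "integrable lborel h \<longleftrightarrow> integrable lborel H" .
  have "integral\<^sup>L lborel h = integral\<^sup>L (distr ?D borel (restrict_vec e)) h"
    by (simp add: distr_unit_cylinder_restrict_vec[OF e])
  also have "\<dots> = integral\<^sup>L ?D (\<lambda>z. h (restrict_vec e z))"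
    by (rule integral_distr) auto
  also have "\<dots> = integral\<^sup>L lborel H"
    unfolding D H_def by (subst integral_density) auto
  finally show "integral\<^sup>L lborel h = integral\<^sup>L lborel H" .
qed

lemma
  fixes e :: "'n::finite \<Rightarrow> 'k::finite" and h :: "real^'n \<Rightarrow> 'b::euclidean_space"
  assumes e: "inj e" and [measurable]: "h \<in> borel_measurable borel" "T \<in> sets borel"
  defines "T' \<equiv> restrict_vec e -` T \<inter> unit_cylinder e"
  shows absolutely_integrable_on_unit_cylinder_iff:
      "h absolutely_integrable_on T \<longleftrightarrow> (\<lambda>z. h (restrict_vec e z)) absolutely_integrable_on T'"
    and integral_unit_cylinder:
      "h absolutely_integrable_on T \<Longrightarrow> integral T h = integral T' (\<lambda>z. h (restrict_vec e z))"
proof -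
  let ?H = "\<lambda>x. indicator T x *\<^sub>R h x"
  have [measurable]: "T' \<in> sets borel" unfolding T'_def by measurable
  have cyl: "(\<lambda>z. indicator (unit_cylinder e) z *\<^sub>R ?H (restrict_vec e z))
      = (\<lambda>z. indicator T' z *\<^sub>R h (restrict_vec e z))"
    by (auto simp: T'_def fun_eq_iff split: split_indicator)
  have "?H \<in> borel_measurable borel" by measurable
  note transfer = lborel_integral_unit_cylinder[OF e this, unfolded cyl]
  have integrable_iff: "h absolutely_integrable_on T \<longleftrightarrow> integrable lborel ?H"
    "(\<lambda>z. h (restrict_vec e z)) absolutely_integrable_on T'
       \<longleftrightarrow> integrable lborel (\<lambda>z. indicator T' z *\<^sub>R h (restrict_vec e z))"
    unfolding set_integrable_def by (simp_all add: integrable_completion)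
  then show iff: "h absolutely_integrable_on T \<longleftrightarrow> (\<lambda>z. h (restrict_vec e z)) absolutely_integrable_on T'"
    using transfer(1) by simp
  assume h: "h absolutely_integrable_on T"
  then have h': "(\<lambda>z. h (restrict_vec e z)) absolutely_integrable_on T'"
    using iff by simp
  have "integral T h = (LINT x:T | lebesgue. h x)"
    using set_lebesgue_integral_eq_integral(2)[OF h] by simp
  also have "\<dots> = integral\<^sup>L lborel ?H"
    unfolding set_lebesgue_integral_def by (simp add: integral_completion)
  also have "\<dots> = integral\<^sup>L lborel (\<lambda>z. indicator T' z *\<^sub>R h (restrict_vec e z))"
    by (rule transfer(2))
  also have "\<dots> = (LINT z:T' | lebesgue. h (restrict_vec e z))"
    unfolding set_lebesgue_integral_def by (simp add: integral_completion)
  also have "\<dots> = integral T' (\<lambda>z. h (restrict_vec e z))"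
    using set_lebesgue_integral_eq_integral(2)[OF h'] by simp
  finally show "integral T h = integral T' (\<lambda>z. h (restrict_vec e z))" .
qed

definition cylinder_extension ::
    "('n::finite \<Rightarrow> 'k::finite) \<Rightarrow> (real^'n \<Rightarrow> real^'n) \<Rightarrow> real^'k \<Rightarrow> real^'k" where
  "cylinder_extension e g z = zero_extend e (g (restrict_vec e z)) + off_range e z"

lemma restrict_vec_cylinder_extension:
  "inj e \<Longrightarrow> restrict_vec e (cylinder_extension e g z) = g (restrict_vec e z)"
  by (simp add: cylinder_extension_def restrict_vec_def zero_extend_def off_range_def vec_eq_iff)

lemma off_range_cylinder_extension: "off_range e (cylinder_extension e g z) = off_range e z"
  by (simp add: cylinder_extension_def zero_extend_def off_range_def vec_eq_iff)

lemma vec_eq_restrict_vec_off_range: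
  "restrict_vec e z = restrict_vec e w \<Longrightarrow> off_range e z = off_range e w \<Longrightarrow> z = w"
  by (auto simp: restrict_vec_def off_range_def vec_eq_iff) (metis image_iff)

lemma has_derivative_cylinder_extension:
  assumes "(g has_derivative g') (at (restrict_vec e z))"
  shows "(cylinder_extension e g has_derivative cylinder_extension e g') (at z)"
proof -
  have "((\<lambda>z. g (restrict_vec e z)) has_derivative (\<lambda>v. g' (restrict_vec e v))) (at z)"
    using has_derivative_compose[OF linear_imp_has_derivative[OF linear_restrict_vec] assms]
    by (simp add: comp_def)
  then show ?thesis unfolding cylinder_extension_def[abs_def]
    by (intro has_derivative_add linear_imp_has_derivative[OF linear_off_range]
        bounded_linear.has_derivative[OF linear_conv_bounded_linear[THEN iffD1, OF linear_zero_extend]])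
qed

lemma matrix_cylinder_extension:
  assumes e: "inj e" and L: "linear L"
  shows "matrix (cylinder_extension e L) = extend_matrix e (matrix L)"
proof -
  have restrict_axis:
    "restrict_vec e (axis l 1) = (if l \<in> range e then axis (inv_into UNIV e l) 1 else 0)" for l
    using e by (auto simp: restrict_vec_def vec_eq_iff axis_def inj_eq)
  show ?thesis
    using e linear_0[OF L] unfolding matrix_def cylinder_extension_def restrict_axis
    by (auto simp: extend_matrix_def vec_eq_iff zero_extend_def off_range_def axis_def)
qed

lemma inj_on_cylinder_extension:
  assumes "inj e" "inj g"
  shows "inj_on (cylinder_extension e g) S"
proof (rule inj_onI)
  fix z w assume eq: "cylinder_extension e g z = cylinder_extension e g w"
  then have "g (restrict_vec e z) = g (restrict_vec e w)"
    by (metis restrict_vec_cylinder_extension[OF assms(1)])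
  with assms(2) have "restrict_vec e z = restrict_vec e w"
    by (simp add: inj_eq)
  moreover have "off_range e z = off_range e w"
    using eq by (metis off_range_cylinder_extension)
  ultimately show "z = w" by (rule vec_eq_restrict_vec_off_range)
qed

lemma unit_cylinder_cong_off_range:
  "off_range e z = off_range e w \<Longrightarrow> z \<in> unit_cylinder e \<longleftrightarrow> w \<in> unit_cylinder e"
  by (simp add: unit_cylinder_def off_range_def vec_eq_iff) (metis (no_types, opaque_lifting))

lemma image_unit_cylinder_extension:
  assumes e: "inj e"
  shows "cylinder_extension e g ` unit_cylinder e = restrict_vec e -` range g \<inter> unit_cylinder e"
proof (intro equalityI subsetI)
  fix w assume "w \<in> cylinder_extension e g ` unit_cylinder e"
  then obtain z where z: "z \<in> unit_cylinder e" "w = cylinder_extension e g z" by blast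
  then have "w \<in> unit_cylinder e"
    using unit_cylinder_cong_off_range[OF off_range_cylinder_extension, of e g z] by blast
  then show "w \<in> restrict_vec e -` range g \<inter> unit_cylinder e"
    using z(2) by (simp add: restrict_vec_cylinder_extension[OF e])
next
  fix w assume w: "w \<in> restrict_vec e -` range g \<inter> unit_cylinder e"
  then obtain x where x: "restrict_vec e w = g x" by auto
  define z where "z = zero_extend e x + off_range e w"
  have z_restrict: "restrict_vec e z = x" and z_off: "off_range e z = off_range e w"
    using e by (simp_all add: z_def restrict_vec_def zero_extend_def off_range_def vec_eq_iff)
  have "restrict_vec e (cylinder_extension e g z) = restrict_vec e w"
    by (simp only: restrict_vec_cylinder_extension[OF e] z_restrict x)
  moreover have "off_range e (cylinder_extension e g z) = off_range e w"
    by (simp only: off_range_cylinder_extension z_off)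
  ultimately have "cylinder_extension e g z = w"
    by (rule vec_eq_restrict_vec_off_range)
  moreover have "z \<in> unit_cylinder e"
    using w unit_cylinder_cong_off_range[OF z_off] by simp
  ultimately show "w \<in> cylinder_extension e g ` unit_cylinder e" by blast
qed

text \<open>The library's change of variables theorem needs a well-ordered index type. An arbitrary
  finite index type embeds into one, \<open>'n bit0\<close>; extending g by the identity on a unit cube in the
  extra coordinates leaves both the Jacobian determinant and the integrals unchanged.\<close>
lemma has_absolute_integral_change_of_variables_UNIV:
  fixes f :: "real^'n::finite \<Rightarrow> real^'m::finite" and g :: "real^'n \<Rightarrow> real^'n"
  assumes der: "\<And>x. (g has_derivative g' x) (at x)" and inj: "inj g"
    and [measurable]: "f \<in> borel_measurable borel"
      "(\<lambda>x. \<bar>det (matrix (g' x))\<bar> *\<^sub>R f (g x)) \<in> borel_measurable borel" "range g \<in> sets borel"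
  shows "(\<lambda>x. \<bar>det (matrix (g' x))\<bar> *\<^sub>R f (g x)) absolutely_integrable_on UNIV \<and>
           integral UNIV (\<lambda>x. \<bar>det (matrix (g' x))\<bar> *\<^sub>R f (g x)) = b
     \<longleftrightarrow> f absolutely_integrable_on range g \<and> integral (range g) f = b"
proof -
  have "CARD('n) \<le> CARD('n bit0)" by simp
  then obtain e :: "'n \<Rightarrow> 'n bit0" where e: "inj e"
    using card_le_inj[OF finite_class.finite_UNIV finite_class.finite_UNIV] by blast
  let ?G = "cylinder_extension e g" and ?G' = "\<lambda>z. cylinder_extension e (g' (restrict_vec e z))"
  have "(?G has_derivative ?G' z) (at z within unit_cylinder e)" for z
    by (rule has_derivative_at_withinI, rule has_derivative_cylinder_extension, rule der)
  moreover have "inj_on ?G (unit_cylinder e)"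
    using e inj by (rule inj_on_cylinder_extension)
  ultimately have cov:
    "(\<lambda>z. \<bar>det (matrix (?G' z))\<bar> *\<^sub>R f (restrict_vec e (?G z))) absolutely_integrable_on unit_cylinder e \<and>
       integral (unit_cylinder e) (\<lambda>z. \<bar>det (matrix (?G' z))\<bar> *\<^sub>R f (restrict_vec e (?G z))) = b
     \<longleftrightarrow> (\<lambda>z. f (restrict_vec e z)) absolutely_integrable_on (?G ` unit_cylinder e) \<and>
       integral (?G ` unit_cylinder e) (\<lambda>z. f (restrict_vec e z)) = b"
    by (intro has_absolute_integral_change_of_variables[of "unit_cylinder e" ?G ?G']) simp_all
  have "det (matrix (?G' z)) = det (matrix (g' (restrict_vec e z)))" for z
    using has_derivative_linear[OF der]
    by (simp add: matrix_cylinder_extension[OF e] det_extend_matrix[OF e])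
  then have integrand: "(\<lambda>z. \<bar>det (matrix (?G' z))\<bar> *\<^sub>R f (restrict_vec e (?G z)))
      = (\<lambda>z. (\<lambda>x. \<bar>det (matrix (g' x))\<bar> *\<^sub>R f (g x)) (restrict_vec e z))"
    by (simp add: restrict_vec_cylinder_extension[OF e])
  have cylinder_UNIV: "restrict_vec e -` UNIV \<inter> unit_cylinder e = unit_cylinder e" by simp
  show ?thesis
    using cov
      absolutely_integrable_on_unit_cylinder_iff[OF e assms(4) sets.top, unfolded cylinder_UNIV]
      integral_unit_cylinder[OF e assms(4) sets.top, unfolded cylinder_UNIV]
      absolutely_integrable_on_unit_cylinder_iff[OF e assms(3,5)]
      integral_unit_cylinder[OF e assms(3,5)]
    unfolding integrand image_unit_cylinder_extension[OF e]
    by auto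
qed

section \<open>Calculus on Euclidean space\<close>

lemma partial_deriv_eq:
  fixes f :: "real^'n \<Rightarrow> real"
  assumes "(f has_derivative f') (at x)"
  shows "partial_deriv f i x = f' (axis i 1)"
proof -
  have "((\<lambda>t. x + t *\<^sub>R axis i 1) has_derivative (\<lambda>t. t *\<^sub>R axis i 1)) (at 0)"
    by (auto intro!: derivative_eq_intros)
  then have "((\<lambda>t. f (x + t *\<^sub>R axis i 1)) has_derivative (\<lambda>t. f' (t *\<^sub>R axis i 1))) (at 0)"
    using has_derivative_compose[of "\<lambda>t. x + t *\<^sub>R axis i 1" _ 0 UNIV f f'] assms
    by (simp add: comp_def)
  moreover have "(\<lambda>t. f' (t *\<^sub>R axis i 1)) = (\<lambda>t. f' (axis i 1) * t)"
    using linear_scale[OF has_derivative_linear[OF assms]] by (auto simp: mult.commute)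
  ultimately have "((\<lambda>t. f (x + t *\<^sub>R axis i 1)) has_field_derivative f' (axis i 1)) (at 0)"
    by (simp add: has_field_derivative_def)
  then show ?thesis unfolding partial_deriv_def by (rule DERIV_imp_deriv)
qed

lemma partial_deriv_component:
  assumes "(g has_derivative g') (at x)"
  shows "partial_deriv (\<lambda>y. g y $ j) i x = g' (axis i 1) $ j"
  using partial_deriv_eq[OF has_derivative_compose[OF assms bounded_linear_vec_nth[THEN
      bounded_linear_imp_has_derivative]]]
  by (simp add: comp_def)

lemma weighted_variance_identity:
  fixes w s :: "'a \<Rightarrow> real"
  shows "2 * ((\<Sum>I\<in>A. w I) * (\<Sum>I\<in>A. w I * (s I)^2) - (\<Sum>I\<in>A. w I * s I)^2)
       = (\<Sum>I\<in>A. \<Sum>J\<in>A. w I * w J * (s I - s J)^2)"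
proof -
  have "(\<Sum>I\<in>A. \<Sum>J\<in>A. w I * w J * (s I - s J)^2)
     = (\<Sum>I\<in>A. \<Sum>J\<in>A. w I * (s I)^2 * w J + w I * (w J * (s J)^2) - 2 * (w I * s I * (w J * s J)))"
    by (intro sum.cong refl) (simp add: power2_eq_square algebra_simps)
  also have "\<dots> = (\<Sum>I\<in>A. w I * (s I)^2) * (\<Sum>J\<in>A. w J) + (\<Sum>I\<in>A. w I) * (\<Sum>J\<in>A. w J * (s J)^2)
       - 2 * ((\<Sum>I\<in>A. w I * s I) * (\<Sum>J\<in>A. w J * s J))"
    by (simp add: sum.distrib sum_subtractf sum_product sum_distrib_left[symmetric])
  finally show ?thesis by (simp add: power2_eq_square algebra_simps)
qed

lemma weighted_variance_pos:
  fixes w s :: "'a \<Rightarrow> real"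
  assumes "finite A" and w: "\<And>I. I \<in> A \<Longrightarrow> w I > 0" and "I \<in> A" "J \<in> A" "s I \<noteq> s J"
  shows "(\<Sum>I\<in>A. w I * s I)^2 < (\<Sum>I\<in>A. w I) * (\<Sum>I\<in>A. w I * (s I)^2)"
proof -
  have nonneg: "0 \<le> w I' * w J' * (s I' - s J')^2" if "I' \<in> A" "J' \<in> A" for I' J'
    using w that by (simp add: less_imp_le)
  have "0 < (\<Sum>J'\<in>A. w I * w J' * (s I - s J')^2)"
    using assms nonneg by (intro sum_pos2[of _ J]) auto
  then have "0 < (\<Sum>I'\<in>A. \<Sum>J'\<in>A. w I' * w J' * (s I' - s J')^2)"
    by (rule sum_pos2[OF \<open>finite A\<close> \<open>I \<in> A\<close>]) (use nonneg in \<open>auto intro: sum_nonneg\<close>)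
  then have "0 < 2 * ((\<Sum>I\<in>A. w I) * (\<Sum>I\<in>A. w I * (s I)^2) - (\<Sum>I\<in>A. w I * s I)^2)"
    by (simp only: weighted_variance_identity)
  then show ?thesis by simp
qed

text \<open>A map whose derivative is everywhere positive definite is injective: along the segment from
  x to y the function t \<mapsto> (y - x) \<bullet> g (x + t (y - x)) is strictly increasing.\<close>
lemma inj_if_has_derivative_pos_definite:
  fixes g :: "'a::real_inner \<Rightarrow> 'a"
  assumes der: "\<And>x. (g has_derivative g' x) (at x)" and pos: "\<And>x v. v \<noteq> 0 \<Longrightarrow> v \<bullet> g' x v > 0"
  shows "inj g"
proof (rule injI, rule ccontr)
  fix x y assume eq: "g x = g y" and "x \<noteq> y"
  define v where "v = y - x"
  have "v \<noteq> 0" using \<open>x \<noteq> y\<close> by (simp add: v_def)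
  define \<phi> where "\<phi> t = v \<bullet> g (x + t *\<^sub>R v)" for t
  have "(\<phi> has_real_derivative v \<bullet> g' (x + t *\<^sub>R v) v) (at t)" for t
  proof -
    have "((\<lambda>t. x + t *\<^sub>R v) has_derivative (\<lambda>s. s *\<^sub>R v)) (at t)"
      by (auto intro!: derivative_eq_intros)
    from has_derivative_compose[OF this der]
    have "(\<phi> has_derivative (\<lambda>s. v \<bullet> g' (x + t *\<^sub>R v) (s *\<^sub>R v))) (at t)"
      unfolding \<phi>_def by (auto intro!: derivative_eq_intros simp: comp_def)
    moreover have "(\<lambda>s. v \<bullet> g' (x + t *\<^sub>R v) (s *\<^sub>R v)) = (*) (v \<bullet> g' (x + t *\<^sub>R v) v)"
      using linear_scale[OF has_derivative_linear[OF der]] by (simp add: fun_eq_iff)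
    ultimately show ?thesis
      by (simp add: has_field_derivative_def)
  qed
  then obtain t where "\<phi> 1 - \<phi> 0 = (1 - 0) * (v \<bullet> g' (x + t *\<^sub>R v) v)"
    using MVT2[of 0 1 \<phi> "\<lambda>t. v \<bullet> g' (x + t *\<^sub>R v) v"] by auto
  moreover have "\<phi> 1 = \<phi> 0" using eq by (simp add: \<phi>_def v_def)
  ultimately show False using pos[OF \<open>v \<noteq> 0\<close>, of "x + t *\<^sub>R v"] by simp
qed

lemma convex_hull_inner_le:
  fixes S :: "'a::real_inner set"
  assumes "p \<in> convex hull S"
  shows "\<exists>s\<in>S. p \<bullet> x \<le> s \<bullet> x"
proof (rule ccontr)
  assume "\<not> ?thesis"
  then have "S \<subseteq> {y. x \<bullet> y < x \<bullet> p}" by (auto simp: inner_commute not_le)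
  then have "convex hull S \<subseteq> {y. x \<bullet> y < x \<bullet> p}"
    by (intro hull_minimal convex_halfspace_lt)
  with assms show False by auto
qed

lemma coercive_attains_min:
  fixes f :: "'a::euclidean_space \<Rightarrow> real"
  assumes cont: "continuous_on UNIV f" and "\<epsilon> > 0" and coercive: "\<And>x. c + \<epsilon> * norm x \<le> f x"
  obtains x0 where "\<And>y. f x0 \<le> f y"
proof -
  define r where "r = max 0 ((f 0 - c) / \<epsilon>) + 1"
  have "r > 0" by (simp add: r_def add_pos_nonneg)
  then obtain x0 where x0: "x0 \<in> cball 0 r" "\<And>y. y \<in> cball 0 r \<Longrightarrow> f x0 \<le> f y"
    using continuous_attains_inf[of "cball 0 r" f] continuous_on_subset[OF cont] by auto
  have "f x0 \<le> f y" for y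
  proof (cases "norm y \<le> r")
    case False
    have "(f 0 - c) / \<epsilon> \<le> r" by (simp add: r_def)
    then have "f 0 - c \<le> \<epsilon> * r"
      using \<open>\<epsilon> > 0\<close> by (simp add: pos_divide_le_eq mult.commute)
    also have "\<dots> < \<epsilon> * norm y" using False \<open>\<epsilon> > 0\<close> by simp
    finally have "f 0 < f y" using coercive[of y] by simp
    then show ?thesis using x0(2)[of 0] \<open>r > 0\<close> by simp
  qed (use x0 in simp)
  then show ?thesis by (rule that)
qed

lemma
  fixes f :: "'a::euclidean_space \<Rightarrow> 'b::euclidean_space"
  assumes [measurable]: "f \<in> borel_measurable borel"
  shows absolutely_integrable_on_UNIV_iff_lborel: "f absolutely_integrable_on UNIV \<longleftrightarrow> integrable lborel f"
    and integral_UNIV_eq_lborel: "integrable lborel f \<Longrightarrow> integral UNIV f = integral\<^sup>L lborel f"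
proof -
  show iff: "f absolutely_integrable_on UNIV \<longleftrightarrow> integrable lborel f"
    unfolding set_integrable_def by (simp add: integrable_completion)
  assume "integrable lborel f"
  then have "integral UNIV f = (LINT x:UNIV | lebesgue. f x)"
    using iff set_lebesgue_integral_eq_integral(2) by metis
  then show "integral UNIV f = integral\<^sup>L lborel f"
    unfolding set_lebesgue_integral_def by (simp add: integral_completion)
qed

lemma
  fixes f :: "'a::euclidean_space \<Rightarrow> 'b::euclidean_space"
  assumes [measurable]: "f \<in> borel_measurable borel" and f: "f absolutely_integrable_on UNIV"
  shows absolutely_integrable_on_translate: "(\<lambda>x. f (x + c)) absolutely_integrable_on UNIV"
    and integral_translate_UNIV: "integral UNIV (\<lambda>x. f (x + c)) = integral UNIV f"
proof -
  have [measurable]: "(\<lambda>x. f (x + c)) \<in> borel_measurable borel" by measurable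
  have "integrable lborel f"
    using f absolutely_integrable_on_UNIV_iff_lborel[OF assms(1)] by blast
  then have "integrable (distr lborel borel ((+) c)) f" by (simp add: lborel_distr_plus)
  then have shifted: "integrable lborel (\<lambda>x. f (x + c))"
    by (subst (asm) integrable_distr_eq) (auto simp: add.commute)
  then show "(\<lambda>x. f (x + c)) absolutely_integrable_on UNIV"
    by (simp add: absolutely_integrable_on_UNIV_iff_lborel)
  have "integral\<^sup>L lborel f = integral\<^sup>L (distr lborel borel ((+) c)) f" by (simp add: lborel_distr_plus)
  also have "\<dots> = integral\<^sup>L lborel (\<lambda>x. f (x + c))" by (subst integral_distr) (auto simp: add.commute)
  finally show "integral UNIV (\<lambda>x. f (x + c)) = integral UNIV f"
    using integral_UNIV_eq_lborel[OF _ shifted] integral_UNIV_eq_lborel[OF assms(1) \<open>integrable lborel f\<close>]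
    by simp
qed

text \<open>The difference quotients of f along v integrate to 0 by translation invariance; the mean value
  theorem bounds them by h, so dominated convergence passes to the limit.\<close>
lemma
  fixes f f' h :: "'a::euclidean_space \<Rightarrow> real"
  assumes [measurable]: "f \<in> borel_measurable borel" and f: "f absolutely_integrable_on UNIV"
    and der: "\<And>x t. ((\<lambda>t. f (x + t *\<^sub>R v)) has_real_derivative f' (x + t *\<^sub>R v)) (at t)"
    and bound: "\<And>x t. 0 \<le> t \<Longrightarrow> t \<le> 1 \<Longrightarrow> \<bar>f' (x + t *\<^sub>R v)\<bar> \<le> h x"
    and h: "h integrable_on UNIV"
  shows integrable_directional_derivative: "f' integrable_on UNIV"
    and integral_directional_derivative: "integral UNIV f' = 0"
proof -
  define t :: "nat \<Rightarrow> real" where "t m = inverse (Suc m)" for m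
  define q where "q m x = (f (x + t m *\<^sub>R v) - f x) / t m" for m x
  have t: "0 < t m" "t m \<le> 1" for m by (auto simp: t_def field_simps)
  have f_int: "f integrable_on UNIV"
    using f set_lebesgue_integral_eq_integral(1) by blast
  have shifted: "(\<lambda>x. f (x + c)) integrable_on UNIV" for c
    using absolutely_integrable_on_translate[OF _ f] set_lebesgue_integral_eq_integral(1) by auto
  have q_int: "q m integrable_on UNIV" for m
    unfolding q_def by (intro integrable_on_divide integrable_diff shifted f_int)
  have "integral UNIV (q m) = 0" for m
    unfolding q_def using shifted f_int
    by (simp add: integral_diff integral_translate_UNIV[OF _ f] integral_divide)
  moreover have "norm (q m x) \<le> h x" for m x
  proof -
    obtain z where "0 < z" "z < t m"
      and "f (x + t m *\<^sub>R v) - f (x + 0 *\<^sub>R v) = (t m - 0) * f' (x + z *\<^sub>R v)"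
      using MVT2[of 0 "t m" "\<lambda>s. f (x + s *\<^sub>R v)" "\<lambda>s. f' (x + s *\<^sub>R v)"] t[of m] der by blast
    then show ?thesis
      using bound[of z x] t[of m] by (simp add: q_def)
  qed
  moreover have "(\<lambda>m. q m x) \<longlonglongrightarrow> f' x" for x
  proof -
    have "((\<lambda>s. (f (x + s *\<^sub>R v) - f x) / s) \<longlongrightarrow> f' x) (at 0)"
      using der[of x 0] by (simp add: DERIV_def)
    moreover have "filterlim t (at 0) sequentially"
    proof (subst filterlim_at, intro conjI)
      show "\<forall>\<^sub>F m in sequentially. t m \<in> UNIV \<and> t m \<noteq> 0"
        by (rule always_eventually) (simp add: t_def)
      show "t \<longlonglongrightarrow> 0"
        unfolding t_def by (rule LIMSEQ_inverse_real_of_nat)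
    qed
    ultimately show ?thesis unfolding q_def by (rule filterlim_compose)
  qed
  ultimately have "f' integrable_on UNIV" "(\<lambda>m. 0) \<longlonglongrightarrow> integral UNIV f'"
    using dominated_convergence[of q UNIV h f', OF q_int h] by auto
  then show "f' integrable_on UNIV" "integral UNIV f' = 0"
    by (auto dest: LIMSEQ_unique[OF tendsto_const])
qed

lemma absolutely_integrable_on_bounded_continuous:
  fixes f :: "'a::euclidean_space \<Rightarrow> 'b::euclidean_space"
  assumes "continuous_on UNIV f" and "bounded S" and "S \<in> sets lebesgue"
  shows "f absolutely_integrable_on S"
proof -
  obtain c d where "S \<subseteq> cbox c d"
    using bounded_subset_cbox_symmetric[OF assms(2)] by blast
  moreover have "f absolutely_integrable_on cbox c d"
    using assms(1) by (auto intro: absolutely_integrable_continuous continuous_on_subset)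
  ultimately show ?thesis
    using assms(3) by (auto intro: set_integrable_subset)
qed

lemma negligible_closure_diff_convex:
  fixes S C :: "'a::euclidean_space set"
  assumes "convex C" and "interior C \<subseteq> S" and "S \<subseteq> C"
  shows "negligible (closure S - S)"
proof (rule negligible_subset[OF negligible_convex_frontier[OF assms(1)]])
  show "closure S - S \<subseteq> frontier C"
    using closure_mono[OF assms(3)] assms(2) by (auto simp: frontier_def)
qed

lemma measure_closure_pos:
  fixes S :: "'a::euclidean_space set"
  assumes "open S" and "S \<noteq> {}" and "bounded S"
  shows "measure lebesgue (closure S) > 0"
proof -
  obtain p r where "r > 0" "ball p r \<subseteq> S"
    using assms(1,2) open_contains_ball by blast
  then have "measure lebesgue (ball p r) \<le> measure lebesgue (closure S)"
    using closure_subset[of S] assms(3)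
    by (intro measure_mono_fmeasurable) (auto intro: lmeasurable_compact simp: compact_closure)
  moreover have "measure lebesgue (ball p r) > 0"
    using content_ball_pos[OF \<open>r > 0\<close>] by simp
  ultimately show ?thesis by linarith
qed

lemma
  fixes f :: "'a::euclidean_space \<Rightarrow> 'b::banach"
  assumes "negligible (closure S - S)"
  shows integrable_on_closure: "f integrable_on S \<Longrightarrow> f integrable_on closure S"
    and integral_closure: "integral (closure S) f = integral S f"
proof -
  have "negligible {x \<in> S - closure S. f x \<noteq> 0}"
    using closure_subset[of S] by (simp add: Diff_eq_empty_iff[THEN iffD2])
  moreover have "negligible {x \<in> closure S - S. f x \<noteq> 0}"
    using assms by (rule negligible_subset) auto
  ultimately show "f integrable_on S \<Longrightarrow> f integrable_on closure S"
    and "integral (closure S) f = integral S f"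
    by (auto intro: integrable_spike_set integral_spike_set)
qed

section \<open>Toric potentials\<close>

definition of_nat_vec :: "nat^'n \<Rightarrow> real^'n" where
  "of_nat_vec I = (\<chi> i. real (I $ i))"

locale toric_potential =
  fixes \<I> :: "(nat^'n::finite) set" and a :: "nat^'n \<Rightarrow> real"
  assumes finite_exponents: "finite \<I>"
    and small_exponents: "{I. (\<Sum>i\<in>UNIV. I $ i) \<le> 1} \<subseteq> \<I>"
    and coeff_pos: "\<And>I. I \<in> \<I> \<Longrightarrow> a I > 0"
begin

definition weight :: "real^'n \<Rightarrow> nat^'n \<Rightarrow> real" where
  "weight x I = a I * exp (of_nat_vec I \<bullet> x)"

definition Z :: "real^'n \<Rightarrow> real" where
  "Z x = (\<Sum>I\<in>\<I>. weight x I)"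

definition prob :: "real^'n \<Rightarrow> nat^'n \<Rightarrow> real" where
  "prob x I = weight x I / Z x"

definition mean :: "real^'n \<Rightarrow> real^'n" where
  "mean x = (\<Sum>I\<in>\<I>. prob x I *\<^sub>R of_nat_vec I)"

definition covariance :: "real^'n \<Rightarrow> real^'n \<Rightarrow> real^'n" where
  "covariance x h = (\<Sum>I\<in>\<I>. (prob x I * (of_nat_vec I \<bullet> h)) *\<^sub>R of_nat_vec I) - (mean x \<bullet> h) *\<^sub>R mean x"

definition potential :: "real^'n \<Rightarrow> real" where
  "potential x = ln (Z x) - (\<Sum>i\<in>UNIV. x $ i)"

definition moment_map :: "real^'n \<Rightarrow> real^'n" where
  "moment_map x = mean x - 1"

lemma zero_in_exponents: "0 \<in> \<I>"
  using small_exponents by auto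

lemma axis_in_exponents: "axis k 1 \<in> \<I>"
  using small_exponents by (auto simp: axis_def sum.delta)

lemma weight_pos: "I \<in> \<I> \<Longrightarrow> weight x I > 0"
  using coeff_pos by (simp add: weight_def)

lemma Z_pos: "Z x > 0"
  unfolding Z_def using finite_exponents zero_in_exponents weight_pos by (intro sum_pos) auto

lemma prob_pos: "I \<in> \<I> \<Longrightarrow> prob x I > 0"
  using weight_pos Z_pos by (simp add: prob_def)

lemma sum_prob: "(\<Sum>I\<in>\<I>. prob x I) = 1"
  using Z_pos[of x] by (simp add: prob_def Z_def sum_divide_distrib[symmetric])

lemma inner_mean: "mean x \<bullet> h = (\<Sum>I\<in>\<I>. prob x I * (of_nat_vec I \<bullet> h))"
  by (simp add: mean_def inner_sum_left)

lemma has_derivative_weight: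
  "((\<lambda>x. weight x I) has_derivative (\<lambda>h. weight x I * (of_nat_vec I \<bullet> h))) (at x)"
  unfolding weight_def by (auto intro!: derivative_eq_intros)

lemma has_derivative_Z: "(Z has_derivative (\<lambda>h. Z x * (mean x \<bullet> h))) (at x)"
proof -
  have "Z x * (mean x \<bullet> h) = (\<Sum>I\<in>\<I>. weight x I * (of_nat_vec I \<bullet> h))" for h
    using Z_pos[of x] by (simp add: inner_mean prob_def sum_distrib_left)
  then show ?thesis
    unfolding Z_def[abs_def] by (auto intro!: has_derivative_sum has_derivative_weight)
qed

lemma has_derivative_prob:
  "((\<lambda>x. prob x I) has_derivative (\<lambda>h. prob x I * (of_nat_vec I \<bullet> h - mean x \<bullet> h))) (at x)"
proof -
  have "Z x \<noteq> 0" using Z_pos[of x] by simp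
  then show ?thesis
    unfolding prob_def[abs_def]
    by (rule has_derivative_eq_rhs[OF has_derivative_divide[OF has_derivative_weight has_derivative_Z]])
       (simp add: fun_eq_iff field_simps)
qed

lemma has_derivative_mean: "(mean has_derivative covariance x) (at x)"
proof -
  have "covariance x = (\<lambda>h. \<Sum>I\<in>\<I>. (prob x I * (of_nat_vec I \<bullet> h - mean x \<bullet> h)) *\<^sub>R of_nat_vec I)"
    by (simp add: fun_eq_iff covariance_def algebra_simps sum_subtractf scaleR_sum_right mean_def)
  then have "((\<lambda>y. \<Sum>I\<in>\<I>. prob y I *\<^sub>R of_nat_vec I) has_derivative covariance x) (at x)"
    by (simp only:) (intro has_derivative_sum has_derivative_scaleR_left has_derivative_prob)
  then show ?thesis by (simp add: mean_def[abs_def])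
qed

lemma has_derivative_ln_Z: "((\<lambda>x. ln (Z x)) has_derivative (\<lambda>h. mean x \<bullet> h)) (at x)"
  using Z_pos[of x] by (auto intro!: derivative_eq_intros has_derivative_Z)

lemma has_derivative_potential: "(potential has_derivative (\<lambda>h. moment_map x \<bullet> h)) (at x)"
proof -
  have "potential = (\<lambda>x. ln (Z x) - 1 \<bullet> x)"
    by (simp add: fun_eq_iff potential_def inner_vec_def)
  then show ?thesis
    unfolding moment_map_def inner_diff_left
    by (simp only:) (intro has_derivative_diff has_derivative_ln_Z bounded_linear_imp_has_derivative
        bounded_linear_inner_right)
qed

lemma has_derivative_moment_map: "(moment_map has_derivative covariance x) (at x)"
  unfolding moment_map_def[abs_def] using has_derivative_mean by (auto intro!: derivative_eq_intros)

lemma grad_potential: "grad potential = moment_map"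
  by (simp add: fun_eq_iff vec_eq_iff grad_def partial_deriv_eq[OF has_derivative_potential]
      inner_axis)

lemma hessian_potential: "hessian potential x = transpose (matrix (covariance x))"
proof -
  have "(\<lambda>y. partial_deriv potential j y) = (\<lambda>y. moment_map y $ j)" for j
    by (metis grad_def grad_potential vec_lambda_beta)
  then show ?thesis
    by (simp add: hessian_def transpose_def matrix_def vec_eq_iff
        partial_deriv_component[OF has_derivative_moment_map])
qed

lemma inner_covariance:
  "h \<bullet> covariance x h = (\<Sum>I\<in>\<I>. prob x I * (of_nat_vec I \<bullet> h)^2) - (mean x \<bullet> h)^2"
  by (simp add: covariance_def inner_diff_right inner_sum_right power2_eq_square mult_ac inner_commute)

lemma covariance_pos_definite:
  assumes "h \<noteq> 0"
  shows "h \<bullet> covariance x h > 0"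
proof -
  obtain k where k: "h $ k \<noteq> 0" using assms by (auto simp: vec_eq_iff)
  have "of_nat_vec (0::nat^'n) = 0" "of_nat_vec (axis k 1 :: nat^'n) = axis k 1"
    by (simp_all add: of_nat_vec_def axis_def vec_eq_iff)
  then have "of_nat_vec 0 \<bullet> h \<noteq> of_nat_vec (axis k 1) \<bullet> h"
    using k by (simp add: inner_commute inner_axis)
  then have "(\<Sum>I\<in>\<I>. prob x I * (of_nat_vec I \<bullet> h))^2
      < (\<Sum>I\<in>\<I>. prob x I) * (\<Sum>I\<in>\<I>. prob x I * (of_nat_vec I \<bullet> h)^2)"
    using weighted_variance_pos[where A=\<I> and w="prob x" and s="\<lambda>I. of_nat_vec I \<bullet> h",
          OF finite_exponents prob_pos zero_in_exponents axis_in_exponents]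
    by simp
  then show ?thesis by (simp add: inner_covariance inner_mean sum_prob)
qed

lemma inj_moment_map: "inj moment_map"
  by (rule inj_if_has_derivative_pos_definite[OF has_derivative_moment_map covariance_pos_definite])

definition Newton_polytope :: "(real^'n) set" where
  "Newton_polytope = convex hull (of_nat_vec ` \<I>)"

definition moment_polytope :: "(real^'n) set" where
  "moment_polytope = (\<lambda>p. p - 1) ` Newton_polytope"

lemma mean_in_Newton_polytope: "mean x \<in> Newton_polytope"
  unfolding mean_def Newton_polytope_def
  using prob_pos sum_prob
  by (intro convex_sum finite_exponents convex_convex_hull) (auto intro: less_imp_le hull_inc)

lemma moment_map_in_moment_polytope: "moment_map x \<in> moment_polytope"
  using mean_in_Newton_polytope by (auto simp: moment_polytope_def moment_map_def)

lemma compact_moment_polytope: "compact moment_polytope"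
  unfolding moment_polytope_def Newton_polytope_def
  using finite_exponents
  by (intro compact_translation_subtract compact_convex_hull finite_imp_compact) simp

lemma convex_moment_polytope: "convex moment_polytope"
  unfolding moment_polytope_def Newton_polytope_def by (simp add: convex_translation_subtract)

text \<open>If q lies well inside the Newton polytope, some exponent I has a larger pairing with x than
  q + \<epsilon> x / |x|, and the term of I alone dominates in Z.\<close>
lemma ln_Z_coercive:
  assumes "\<epsilon> > 0" and "cball q \<epsilon> \<subseteq> Newton_polytope"
  shows "ln (Min (a ` \<I>)) + \<epsilon> * norm x \<le> ln (Z x) - q \<bullet> x"
proof -
  define p where "p = q + (\<epsilon> / norm x) *\<^sub>R x"
  have "dist q p \<le> \<epsilon>"
    using assms(1) by (cases "x = 0") (auto simp: p_def dist_norm)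
  then have "p \<in> Newton_polytope" using assms(2) by auto
  then obtain I where I: "I \<in> \<I>" "p \<bullet> x \<le> of_nat_vec I \<bullet> x"
    using convex_hull_inner_le[of p "of_nat_vec ` \<I>" x] by (auto simp: Newton_polytope_def)
  have "p \<bullet> x = q \<bullet> x + \<epsilon> * norm x"
    by (cases "x = 0") (auto simp: p_def inner_add_left power2_norm_eq_inner[symmetric] power2_eq_square)
  moreover have "Min (a ` \<I>) * exp (of_nat_vec I \<bullet> x) \<le> Z x"
  proof -
    have "Min (a ` \<I>) \<le> a I" using I(1) finite_exponents by simp
    then have "Min (a ` \<I>) * exp (of_nat_vec I \<bullet> x) \<le> weight x I"
      by (simp add: weight_def)
    also have "\<dots> \<le> Z x"
      unfolding Z_def using I(1) finite_exponents weight_pos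
      by (intro member_le_sum) (auto intro: less_imp_le)
    finally show ?thesis .
  qed
  moreover have "Min (a ` \<I>) > 0"
    using finite_exponents zero_in_exponents coeff_pos by (subst Min_gr_iff) auto
  ultimately show ?thesis
    using I(2) Z_pos[of x] by (simp add: ln_mult ln_le_cancel_iff[symmetric] del: ln_le_cancel_iff)
qed

lemma mean_surj_interior:
  assumes "q \<in> interior Newton_polytope"
  shows "\<exists>x. mean x = q"
proof -
  obtain \<epsilon> where "\<epsilon> > 0" "cball q \<epsilon> \<subseteq> Newton_polytope"
    using assms by (auto simp: mem_interior_cball)
  define \<psi> where "\<psi> x = ln (Z x) - q \<bullet> x" for x
  have der: "(\<psi> has_derivative (\<lambda>h. (mean x - q) \<bullet> h)) (at x)" for x
    unfolding \<psi>_def inner_diff_left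
    by (intro has_derivative_diff has_derivative_ln_Z bounded_linear_imp_has_derivative
        bounded_linear_inner_right)
  then have "continuous_on UNIV \<psi>"
    by (blast intro: continuous_at_imp_continuous_on has_derivative_continuous)
  moreover have "ln (Min (a ` \<I>)) + \<epsilon> * norm x \<le> \<psi> x" for x
    unfolding \<psi>_def by (rule ln_Z_coercive) fact+
  ultimately obtain x0 where "\<And>y. \<psi> x0 \<le> \<psi> y"
    using coercive_attains_min[OF _ \<open>\<epsilon> > 0\<close>] by blast
  then have "(\<lambda>h. (mean x0 - q) \<bullet> h) = (\<lambda>h. 0)"
    by (intro has_derivative_local_min[OF der] always_eventually) simp
  then have "(mean x0 - q) \<bullet> (mean x0 - q) = 0" by metis
  then show ?thesis by auto
qed

lemma interior_moment_polytope_subset: "interior moment_polytope \<subseteq> range moment_map"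
proof
  fix p assume "p \<in> interior moment_polytope"
  then have "p + 1 \<in> interior Newton_polytope"
    by (auto simp: moment_polytope_def interior_translation_subtract)
  then obtain x where "mean x = p + 1" using mean_surj_interior by blast
  then show "p \<in> range moment_map"
    by (metis add_diff_cancel moment_map_def rangeI)
qed

lemma continuous_moment_map: "continuous_on UNIV moment_map"
  by (blast intro: continuous_at_imp_continuous_on has_derivative_continuous has_derivative_moment_map)

lemma open_range_moment_map: "open (range moment_map)"
  by (rule invariance_of_domain[OF continuous_moment_map open_UNIV inj_on_subset[OF inj_moment_map]])
     simp

lemma continuous_potential: "continuous_on UNIV potential"
  by (blast intro: continuous_at_imp_continuous_on has_derivative_continuous has_derivative_potential)

lemma exp_neg_potential: "exp (- potential x) = exp (\<Sum>i\<in>UNIV. x $ i) / Z x"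
  using Z_pos[of x] by (simp add: potential_def exp_diff)

text \<open>Moving in a coordinate direction raises every monomial, so Z grows, while the linear part
  of the potential drops by exactly the step length.\<close>
lemma exp_neg_potential_shift_le:
  assumes "s \<ge> 0"
  shows "exp (- potential (x + s *\<^sub>R axis k 1)) \<le> exp s * exp (- potential x)"
proof -
  have "Z x \<le> Z (x + s *\<^sub>R axis k 1)"
    unfolding Z_def weight_def using assms coeff_pos
    by (intro sum_mono) (simp add: inner_add_right inner_axis of_nat_vec_def)
  moreover have "(\<Sum>i\<in>UNIV. (x + s *\<^sub>R axis k 1) $ i) = (\<Sum>i\<in>UNIV. x $ i) + s"
    by (simp add: sum.distrib axis_def if_distrib[of "\<lambda>z. s * z"] cong: if_cong)
  ultimately show ?thesis
    using Z_pos[of x]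
    by (simp add: exp_neg_potential exp_add divide_left_mono mult.commute[of "exp s"]
        flip: times_divide_eq_right)
qed

lemma has_real_derivative_exp_neg_potential_line:
  "((\<lambda>t. exp (- potential (x + t *\<^sub>R v))) has_real_derivative
     - exp (- potential (x + t *\<^sub>R v)) * (moment_map (x + t *\<^sub>R v) \<bullet> v)) (at t)"
proof -
  have "((\<lambda>t. x + t *\<^sub>R v) has_derivative (\<lambda>s. s *\<^sub>R v)) (at t)"
    by (auto intro!: derivative_eq_intros)
  from has_derivative_compose[OF this has_derivative_potential]
  have "((\<lambda>t. potential (x + t *\<^sub>R v)) has_derivative (*) (moment_map (x + t *\<^sub>R v) \<bullet> v)) (at t)"
    by (rule has_derivative_eq_rhs[unfolded comp_def]) (simp add: fun_eq_iff)
  then have "((\<lambda>t. potential (x + t *\<^sub>R v)) has_real_derivative moment_map (x + t *\<^sub>R v) \<bullet> v) (at t)"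
    by (simp add: has_field_derivative_def)
  then show ?thesis by (auto intro!: derivative_eq_intros)
qed

lemma bounded_range_moment_map: "bounded (range moment_map)"
  using moment_map_in_moment_polytope compact_moment_polytope
  by (meson bounded_subset compact_imp_bounded image_subset_iff)

lemma absolutely_integrable_on_range_moment_map:
  "(\<lambda>y. y) absolutely_integrable_on range moment_map"
  using bounded_range_moment_map open_range_moment_map
  by (intro absolutely_integrable_on_bounded_continuous) auto

lemma negligible_closure_diff_range_moment_map:
  "negligible (closure (range moment_map) - range moment_map)"
  using convex_moment_polytope interior_moment_polytope_subset moment_map_in_moment_polytope
  by (intro negligible_closure_diff_convex) auto

lemma exp_neg_potential_moment_map_bound:
  assumes B: "\<And>y. norm (moment_map y) \<le> B" and "0 \<le> t" "t \<le> 1"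
  shows "\<bar>- exp (- potential (x + t *\<^sub>R axis k 1)) * (moment_map (x + t *\<^sub>R axis k 1) \<bullet> axis k 1)\<bar>
    \<le> exp 1 * B * exp (- potential x)"
proof -
  have "B \<ge> 0" using B[of 0] norm_ge_zero order_trans by blast
  have "\<bar>- exp (- potential (x + t *\<^sub>R axis k 1)) * (moment_map (x + t *\<^sub>R axis k 1) \<bullet> axis k 1)\<bar>
      \<le> (exp t * exp (- potential x)) * B"
    using exp_neg_potential_shift_le[OF \<open>0 \<le> t\<close>, of x k] B[of "x + t *\<^sub>R axis k 1"]
      Basis_le_norm[of "axis k 1" "moment_map (x + t *\<^sub>R axis k 1)"]
    by (auto simp: abs_mult intro!: mult_mono)
  also have "\<dots> \<le> (exp 1 * exp (- potential x)) * B"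
    using \<open>t \<le> 1\<close> \<open>B \<ge> 0\<close> by (intro mult_right_mono) simp_all
  finally show ?thesis by (simp add: mult_ac)
qed

lemma
  assumes "(\<lambda>x. exp (- potential x)) absolutely_integrable_on UNIV"
  shows integrable_exp_neg_potential_moment_map_component:
      "(\<lambda>x. exp (- potential x) * moment_map x $ k) integrable_on UNIV"
    and integral_exp_neg_potential_moment_map_component:
      "integral UNIV (\<lambda>x. exp (- potential x) * moment_map x $ k) = 0"
proof -
  obtain B where B: "\<And>x. norm (moment_map x) \<le> B"
    using bounded_range_moment_map by (auto simp: bounded_iff)
  have [measurable]: "(\<lambda>x. exp (- potential x)) \<in> borel_measurable borel"
    by (intro borel_measurable_continuous_onI continuous_intros continuous_potential)
  have bound: "\<bar>- exp (- potential (x + t *\<^sub>R axis k 1)) * (moment_map (x + t *\<^sub>R axis k 1) \<bullet> axis k 1)\<bar>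
      \<le> exp 1 * B * exp (- potential x)" if "0 \<le> t" "t \<le> 1" for x t
    using exp_neg_potential_moment_map_bound[OF B that] .
  have dominant: "(\<lambda>x. exp 1 * B * exp (- potential x)) integrable_on UNIV"
    using integrable_on_cmult_left[OF set_lebesgue_integral_eq_integral(1)[OF assms], of "exp 1 * B"]
    by simp
  note directional = integrable_directional_derivative integral_directional_derivative
  note minus_component = directional[where v="axis k 1"
      and f'="\<lambda>y. - exp (- potential y) * (moment_map y \<bullet> axis k 1)",
      OF _ assms has_real_derivative_exp_neg_potential_line bound dominant]
  show "(\<lambda>x. exp (- potential x) * moment_map x $ k) integrable_on UNIV"
    using integrable_neg[OF minus_component(1)] by (simp add: inner_axis)
  show "integral UNIV (\<lambda>x. exp (- potential x) * moment_map x $ k) = 0"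
    using minus_component by (simp add: inner_axis integral_neg)
qed

lemma integral_exp_neg_potential_moment_map:
  assumes "(\<lambda>x. exp (- potential x)) absolutely_integrable_on UNIV"
  shows "integral UNIV (\<lambda>x. exp (- potential x) *\<^sub>R moment_map x) = 0"
proof -
  have "(\<lambda>x. exp (- potential x) *\<^sub>R moment_map x) integrable_on UNIV"
  proof (rule integrable_componentwise)
    fix b :: "real^'n" assume "b \<in> Basis"
    then obtain k where "b = axis k 1" by (auto simp: Basis_vec_def)
    then show "(\<lambda>x. (exp (- potential x) *\<^sub>R moment_map x) \<bullet> b) integrable_on UNIV"
      using integrable_exp_neg_potential_moment_map_component[OF assms, of k] by (simp add: inner_axis)
  qed
  then show ?thesis
    using integral_exp_neg_potential_moment_map_component[OF assms]
    by (simp add: vec_eq_iff flip: integral_component_eq_cart)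
qed

end

locale toric_solution = toric_potential \<I> a for \<I> :: "(nat^'n::finite) set" and a +
  assumes Monge_Ampere: "\<And>x. det (hessian potential x) = exp (- potential x)"
begin

lemma det_covariance: "det (matrix (covariance x)) = exp (- potential x)"
  using Monge_Ampere[of x] by (simp add: hessian_potential det_transpose)

lemma change_of_variables_moment_map:
  fixes f :: "real^'n \<Rightarrow> real^'m::finite"
  assumes "continuous_on UNIV f"
  shows "(\<lambda>x. exp (- potential x) *\<^sub>R f (moment_map x)) absolutely_integrable_on UNIV \<and>
           integral UNIV (\<lambda>x. exp (- potential x) *\<^sub>R f (moment_map x)) = b
     \<longleftrightarrow> f absolutely_integrable_on range moment_map \<and> integral (range moment_map) f = b"
proof -
  have "(\<lambda>x. \<bar>det (matrix (covariance x))\<bar> *\<^sub>R f (moment_map x)) \<in> borel_measurable borel"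
    unfolding det_covariance
    by (intro borel_measurable_continuous_onI continuous_intros continuous_potential
        continuous_on_compose2[OF assms continuous_moment_map]) auto
  moreover have "f \<in> borel_measurable borel"
    using assms by (rule borel_measurable_continuous_onI)
  moreover have "range moment_map \<in> sets borel"
    using open_range_moment_map by (rule borel_open)
  ultimately show ?thesis
    using has_absolute_integral_change_of_variables_UNIV[OF has_derivative_moment_map inj_moment_map]
    by (simp add: det_covariance)
qed

lemma absolutely_integrable_exp_neg_potential:
  "(\<lambda>x. exp (- potential x)) absolutely_integrable_on UNIV"
proof -
  have "(\<lambda>y. 1 :: real^'n) absolutely_integrable_on range moment_map"
    using bounded_range_moment_map open_range_moment_map
    by (intro absolutely_integrable_on_bounded_continuous) auto
  then have "(\<lambda>x. exp (- potential x) *\<^sub>R (1 :: real^'n)) absolutely_integrable_on UNIV"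
    using change_of_variables_moment_map[of "\<lambda>y. 1"] by auto
  then have "(\<lambda>x. (exp (- potential x) *\<^sub>R (1 :: real^'n)) \<bullet> axis k 1) absolutely_integrable_on UNIV"
    for k by (rule absolutely_integrable_component)
  then show ?thesis by (simp add: inner_axis)
qed

lemma integral_range_moment_map: "integral (range moment_map) (\<lambda>y. y) = 0"
proof -
  have "integral (range moment_map) (\<lambda>y. y) = integral UNIV (\<lambda>x. exp (- potential x) *\<^sub>R moment_map x)"
    using change_of_variables_moment_map[of "\<lambda>y. y"] absolutely_integrable_on_range_moment_map
    by auto
  also have "\<dots> = 0"
    by (rule integral_exp_neg_potential_moment_map[OF absolutely_integrable_exp_neg_potential])
  finally show ?thesis .
qed


end

theorem lemma6:
  fixes \<I> :: "(nat^'n) set" and a :: "nat^'n \<Rightarrow> real" and u :: "real^'n \<Rightarrow> real"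
  assumes "finite \<I>"
    and "{I. (\<Sum>i\<in>UNIV. I $ i) \<le> 1} \<subseteq> \<I>"
    and "\<And>I. I \<in> \<I> \<Longrightarrow> a I > 0"
    and "\<And>I. (\<Sum>i\<in>UNIV. I $ i) \<le> 1 \<Longrightarrow> a I = 1"
    and "\<And>x. u x = ln (\<Sum>I\<in>\<I>. a I * exp (\<Sum>i\<in>UNIV. real (I $ i) * x $ i))
                     - (\<Sum>i\<in>UNIV. x $ i)"
    and "\<And>x. det (hessian u x) = exp (- u x)"
  shows "measure lebesgue (closure (range (grad u))) > 0
         \<and> (\<lambda>y. y) integrable_on closure (range (grad u))
         \<and> barycenter (closure (range (grad u))) = 0"
proof -
  interpret toric_potential \<I> a
    using assms(1-3) by unfold_locales
  have u: "u = potential"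
    by (simp add: fun_eq_iff assms(5) potential_def Z_def weight_def of_nat_vec_def inner_vec_def mult.commute)
  interpret toric_solution \<I> a
    using assms(6) by unfold_locales (simp add: u)
  let ?R = "range moment_map"
  have grad_u: "grad u = moment_map" by (simp add: u grad_potential)
  have "(\<lambda>y. y) integrable_on closure ?R"
    using absolutely_integrable_on_range_moment_map set_lebesgue_integral_eq_integral(1)
    by (intro integrable_on_closure[OF negligible_closure_diff_range_moment_map]) blast
  moreover have "integral (closure ?R) (\<lambda>y. y) = 0"
    by (simp add: integral_closure[OF negligible_closure_diff_range_moment_map] integral_range_moment_map)
  moreover have "measure lebesgue (closure ?R) > 0"
    using open_range_moment_map bounded_range_moment_map by (intro measure_closure_pos) auto
  ultimately show ?thesis
    by (simp add: grad_u barycenter_def)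
qed

end
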